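(* Let $F:\mathbb{R}^n\to\mathbb{R}^m$ be continuous and $C:\mathbb{R}^n\rightrightarrows\mathbb{R}^m$ have closed graph. Define $\varSigma(u):=F(u)+C(u)$, $\mathcal{C}(u):=(-u,F(u))+\mathrm{gph}\,C$ (a map $\mathbb{R}^n\rightrightarrows\mathbb{R}^n\times\mathbb{R}^m$), $Q(u,y):=(F(u)+y)+\varDelta_{\mathrm{gph}\,C}(u,y)$ (a map $\mathbb{R}^n\times\mathbb{R}^m\rightrightarrows\mathbb{R}^m$), and $\mathcal{Q}(u,\sigma,y):=(-u+\sigma,F(u)+y)+\varDelta_{\mathrm{gph}\,C}(\sigma,y)$ (a map $\mathbb{R}^n\times\mathbb{R}^n\times\mathbb{R}^m\rightrightarrows\mathbb{R}^n\times\mathbb{R}^m$). Let $(\bar u,\bar y)\in\mathrm{gph}\,C$ and assume $F$ is strictly differentiable at $\bar u$. Then the numbers $R_\varSigma:=\mathrm{Reg}(\bar u,F(\bar u)+\bar y;\varSigma)$, $R_{\mathcal{C}}:=\mathrm{Reg}(\bar u,(0,F(\bar u)+\bar y);\mathcal{C})$, $R_Q:=\mathrm{Reg}((\bar u,\bar y),F(\bar u)+\bar y;Q)$, $R_{\mathcal{Q}}:=\mathrm{Reg}((\bar u,\bar u,\bar y),(0,F(\bar u)+\bar y);\mathcal{Q})$ are well defined and satisfy $R_\varSigma\ge\max\{R_{\mathcal{C}},R_Q\}\ge R_{\mathcal{Q}}\ge0$. Moreover, $R_{\mathcal{Q}}=0$ implies $R_\varSigma=R_{\mathcal{C}}=R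_Q=0$.
   Context: For a set $\Omega$, the indicator mapping is $\varDelta_\Omega(x):=\{0\}$ if $x\in\Omega$ and $\emptyset$ otherwise. The polar of a cone $K$ is $K^\circ:=\{v\mid v^\top w\le0\ \forall w\in K\}$; the tangent cone is $T_{C_0}(x):=\limsup_{\tau\searrow0}(C_0-x)/\tau$; the (limiting) normal cone is $N_{C_0}(\bar x):=\limsup_{x\to\bar x,\,x\in C_0}T_{C_0}(x)^\circ$ (Painlevé–Kuratowski outer limits), $N_{C_0}(\bar x):=\emptyset$ if $\bar x\notin C_0$. The coderivative of $S:\mathbb{R}^a\rightrightarrows\mathbb{R}^b$ at $(\bar x,\bar y)\in\mathrm{gph}\,S$ is $D^*S(\bar x|\bar y)(z):=\{v\mid(v,-z)\in N_{\mathrm{gph}\,S}(\bar x,\bar y)\}$. For $S$ with closed graph, $\mathrm{Reg}(u,y;S):=\inf_{\|z\|=1}\mathrm{dist}[0,D^*S(u|y)(z)]$ if $(u,y)\in\mathrm{gph}\,S$ and $:=\infty$ otherwise (with $\mathrm{dist}[0,\emptyset]=\infty$). *)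

theory Defs
  imports "HOL-Analysis.Analysis" "HOL-Library.Extended_Real"
begin

text \<open>Set-valued maps S : 'a =>> 'b are rendered as functions 'a => 'b set.\<close>

definition gph :: "('a \<Rightarrow> 'b set) \<Rightarrow> ('a \<times> 'b) set" where
  "gph S = {(x, y). y \<in> S x}"

definition indicator_map :: "'a set \<Rightarrow> 'a \<Rightarrow> 'b::zero set" where
  "indicator_map \<Omega> x = (if x \<in> \<Omega> then {0} else {})"

definition PK_limsup :: "('a::metric_space \<Rightarrow> 'b::metric_space set) \<Rightarrow> 'a set \<Rightarrow> 'a \<Rightarrow> 'b set" where
  "PK_limsup S D a = {v. \<exists>x u. (\<forall>k. x k \<in> D \<and> u k \<in> S (x k)) \<and> x \<longlonglongrightarrow> a \<and> u \<longlonglongrightarrow> v}"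

definition polar_cone :: "'a::real_inner set \<Rightarrow> 'a set" where
  "polar_cone K = {v. \<forall>w\<in>K. inner v w \<le> 0}"

definition tangent_cone :: "'a::real_normed_vector set \<Rightarrow> 'a \<Rightarrow> 'a set" where
  "tangent_cone C0 x = PK_limsup (\<lambda>\<tau>::real. (\<lambda>c. (1 / \<tau>) *\<^sub>R (c - x)) ` C0) {0<..} 0"

definition normal_cone :: "'a::real_inner set \<Rightarrow> 'a \<Rightarrow> 'a set" where
  "normal_cone C0 xb = (if xb \<in> C0 then PK_limsup (\<lambda>x. polar_cone (tangent_cone C0 x)) C0 xb else {})"

definition coderiv :: "('a::real_inner \<Rightarrow> 'b::real_inner set) \<Rightarrow> 'a \<Rightarrow> 'b \<Rightarrow> 'b \<Rightarrow> 'a set" where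
  "coderiv S xb yb z = {v. (v, - z) \<in> normal_cone (gph S) (xb, yb)}"

text \<open>dist[0,A] as an extended real; the infimum over the empty set is infinity.\<close>
definition dist0 :: "'a::real_normed_vector set \<Rightarrow> ereal" where
  "dist0 A = (INF a\<in>A. ereal (norm a))"

definition Reg :: "'a::real_inner \<Rightarrow> 'b::real_inner \<Rightarrow> ('a \<Rightarrow> 'b set) \<Rightarrow> ereal" where
  "Reg u y S = (if (u, y) \<in> gph S then (INF z\<in>{z. norm z = 1}. dist0 (coderiv S u y z)) else \<infinity>)"

definition strictly_differentiable_at :: "('a::real_normed_vector \<Rightarrow> 'b::real_normed_vector) \<Rightarrow> 'a \<Rightarrow> bool" where
  "strictly_differentiable_at F ub \<longleftrightarrow> (\<exists>A. linear A \<and> (\<forall>\<epsilon>>0. \<exists>\<delta>>0. \<forall>x\<in>ball ub \<delta>. \<forall>x'\<in>ball ub \<delta>.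
      norm (F x - F x' - A (x - x')) \<le> \<epsilon> * norm (x - x')))"

end

(*
  Each of the four graphs is the image of gph C, or of UNIV \<times> gph C, under a change of variables
  built from F that is strictly differentiable at the base point and has a continuous inverse on
  the graph. Such a map carries limiting normals back by the adjoint of its derivative: regular
  normals pull back to Frechet \<epsilon>-normals, and these lie close to proximal normals at nearby
  points. With A the strict derivative of F at ub, a normal (v, -z) to gph \<Sigma> with |z| = 1 gives
  the normals (v, -(A\<^sup>* z - v, z)) to gph CC and ((v, 0), -z) to gph Q, and a normal (v, -z) to
  gph CC gives ((v, 0, 0), -z) to gph QQ; this yields the inequalities. Conversely, a normal
  ((a1, a2, a3), -w) to gph QQ with |w| = 1 forces w1 = A\<^sup>* w2 - a1 and gives the normal
  (a1 + a2 - A\<^sup>* a3, -(w2 - a3)) to gph \<Sigma>, whose second component stays away from 0 as a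
  tends to 0; hence R_QQ = 0 implies R_\<Sigma> = 0.
*)

theory Submission
  imports Defs
begin

lemma power2_norm_diff:
  fixes a b :: "'a::real_inner"
  shows "(norm (a - b))\<^sup>2 = (norm a)\<^sup>2 - 2 * inner a b + (norm b)\<^sup>2"
  by (simp add: power2_norm_eq_inner inner_diff_left inner_diff_right inner_commute)

lemma LIMSEQ_of_dist_less_inverse_Suc:
  fixes c :: "nat \<Rightarrow> 'a::metric_space"
  assumes "\<And>k. dist (c k) y < inverse (real (Suc k))"
  shows "c \<longlonglongrightarrow> y"
proof -
  have "(\<lambda>k. dist (c k) y) \<longlonglongrightarrow> 0"
    by (rule tendsto_sandwich[OF _ _ tendsto_const LIMSEQ_inverse_real_of_nat])
      (use assms in \<open>auto intro: always_eventually less_imp_le\<close>)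
  then show ?thesis
    using tendsto_dist_iff by blast
qed

lemma le_of_power2_le_mult:
  fixes a b :: real
  assumes "a\<^sup>2 \<le> b * a" "0 \<le> b"
  shows "a \<le> b"
proof (rule ccontr)
  assume "\<not> a \<le> b"
  then have "b * a < a * a"
    using assms(2) by (intro mult_strict_right_mono) auto
  then show False
    using assms(1) by (simp add: power2_eq_square)
qed

section \<open>Strict derivatives\<close>

definition has_strict_derivative ::
    "('a::real_normed_vector \<Rightarrow> 'b::real_normed_vector) \<Rightarrow> ('a \<Rightarrow> 'b) \<Rightarrow> 'a \<Rightarrow> bool"
  where "has_strict_derivative f L x \<longleftrightarrow> linear L \<and>
    (\<forall>\<epsilon>>0. \<exists>\<delta>>0. \<forall>x1\<in>ball x \<delta>. \<forall>x2\<in>ball x \<delta>.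
      norm (f x1 - f x2 - L (x1 - x2)) \<le> \<epsilon> * norm (x1 - x2))"

lemma strictly_differentiable_at_iff:
  "strictly_differentiable_at f x \<longleftrightarrow> (\<exists>L. has_strict_derivative f L x)"
  by (simp add: strictly_differentiable_at_def has_strict_derivative_def)

lemma has_strict_derivative_linear: "linear L \<Longrightarrow> has_strict_derivative L L x"
  by (auto simp: has_strict_derivative_def linear_diff intro!: exI[of _ 1])

lemma has_strict_derivative_add_linear:
  assumes g: "has_strict_derivative g G x" and \<Lambda>: "linear \<Lambda>"
  shows "has_strict_derivative (\<lambda>p. \<Lambda> p + g p) (\<lambda>h. \<Lambda> h + G h) x"
proof -
  have remainder: "\<Lambda> x1 + g x1 - (\<Lambda> x2 + g x2) - (\<Lambda> (x1 - x2) + G (x1 - x2)) =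
      g x1 - g x2 - G (x1 - x2)" for x1 x2
    using linear_diff[OF \<Lambda>] by (simp add: algebra_simps)
  have "linear (\<lambda>h. \<Lambda> h + G h)"
    using g \<Lambda> by (simp add: has_strict_derivative_def linear_compose_add)
  then show ?thesis
    using g unfolding has_strict_derivative_def remainder by blast
qed

lemma has_strict_derivative_compose_bounded_linear:
  fixes f :: "'b::euclidean_space \<Rightarrow> 'c::real_normed_vector" and \<pi> :: "'a::euclidean_space \<Rightarrow> 'b"
  assumes f: "has_strict_derivative f A (\<pi> x)" and \<pi>: "linear \<pi>" and J: "bounded_linear J"
  shows "has_strict_derivative (\<lambda>p. J (f (\<pi> p))) (\<lambda>h. J (A (\<pi> h))) x"
proof -
  have linA: "linear A"
    using f by (simp add: has_strict_derivative_def)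
  obtain B\<pi> where B\<pi>: "B\<pi> > 0" "\<And>h. norm (\<pi> h) \<le> B\<pi> * norm h"
    using linear_bounded_pos[OF \<pi>] by blast
  obtain BJ where BJ: "BJ > 0" "\<And>h. norm (J h) \<le> BJ * norm h"
    using bounded_linear.pos_bounded[OF J] by (auto simp: mult.commute)
  have "\<exists>\<delta>>0. \<forall>x1\<in>ball x \<delta>. \<forall>x2\<in>ball x \<delta>.
      norm (J (f (\<pi> x1)) - J (f (\<pi> x2)) - J (A (\<pi> (x1 - x2)))) \<le> \<epsilon> * norm (x1 - x2)"
    if "\<epsilon> > 0" for \<epsilon>
  proof -
    have "\<epsilon> / (BJ * B\<pi>) > 0"
      using \<open>\<epsilon> > 0\<close> BJ(1) B\<pi>(1) by simp
    then obtain \<delta> where \<delta>: "\<delta> > 0" "\<forall>y1\<in>ball (\<pi> x) \<delta>. \<forall>y2\<in>ball (\<pi> x) \<delta>.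
        norm (f y1 - f y2 - A (y1 - y2)) \<le> \<epsilon> / (BJ * B\<pi>) * norm (y1 - y2)"
      using f unfolding has_strict_derivative_def by blast
    have ball: "\<pi> x' \<in> ball (\<pi> x) \<delta>" if "x' \<in> ball x (\<delta> / B\<pi>)" for x'
    proof -
      have "dist (\<pi> x) (\<pi> x') \<le> B\<pi> * dist x x'"
        using B\<pi>(2)[of "x - x'"] by (simp add: dist_norm linear_diff[OF \<pi>])
      also have "\<dots> < \<delta>"
        using that B\<pi>(1) by (simp add: pos_less_divide_eq mult.commute)
      finally show ?thesis
        by simp
    qed
    show ?thesis
    proof (intro exI[of _ "\<delta> / B\<pi>"] conjI ballI)
      fix x1 x2
      assume x12: "x1 \<in> ball x (\<delta> / B\<pi>)" "x2 \<in> ball x (\<delta> / B\<pi>)"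
      have "J (f (\<pi> x1)) - J (f (\<pi> x2)) - J (A (\<pi> (x1 - x2))) =
          J (f (\<pi> x1) - f (\<pi> x2) - A (\<pi> x1 - \<pi> x2))"
        using bounded_linear.linear[OF J] by (simp add: linear_diff[OF \<pi>] linear_diff)
      also have "norm \<dots> \<le> BJ * (\<epsilon> / (BJ * B\<pi>) * norm (\<pi> x1 - \<pi> x2))"
        using BJ \<delta>(2) ball[OF x12(1)] ball[OF x12(2)]
        by (meson order_trans mult_left_mono less_imp_le)
      also have "\<dots> \<le> BJ * (\<epsilon> / (BJ * B\<pi>) * (B\<pi> * norm (x1 - x2)))"
        using B\<pi>(2)[of "x1 - x2"] BJ(1) B\<pi>(1) \<open>\<epsilon> > 0\<close>
        by (intro mult_left_mono) (auto simp: linear_diff[OF \<pi>])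
      also have "\<dots> = \<epsilon> * norm (x1 - x2)"
        using BJ(1) B\<pi>(1) by simp
      finally show "norm (J (f (\<pi> x1)) - J (f (\<pi> x2)) - J (A (\<pi> (x1 - x2)))) \<le> \<epsilon> * norm (x1 - x2)" .
    qed (use \<delta>(1) B\<pi>(1) in simp)
  qed
  moreover have "linear (\<lambda>h. J (A (\<pi> h)))"
    using linear_compose[OF linear_compose[OF \<pi> linA] bounded_linear.linear[OF J]]
    by (simp add: o_def)
  ultimately show ?thesis
    by (simp add: has_strict_derivative_def)
qed

lemma has_strict_derivative_linear_plus_compose:
  fixes f :: "'b::euclidean_space \<Rightarrow> 'c::real_normed_vector" and \<pi> :: "'a::euclidean_space \<Rightarrow> 'b"
  assumes "has_strict_derivative f A (\<pi> x)" "linear \<Lambda>" "linear \<pi>" "bounded_linear J"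
    and \<Psi>: "\<And>p. \<Psi> p = \<Lambda> p + J (f (\<pi> p))" and L: "\<And>h. L h = \<Lambda> h + J (A (\<pi> h))"
  shows "has_strict_derivative \<Psi> L x"
proof -
  have "\<Psi> = (\<lambda>p. \<Lambda> p + J (f (\<pi> p)))" "L = (\<lambda>h. \<Lambda> h + J (A (\<pi> h)))"
    by (simp_all add: fun_eq_iff \<Psi> L)
  then show ?thesis
    using assms(1-4)
    by (simp add: has_strict_derivative_add_linear has_strict_derivative_compose_bounded_linear)
qed

section \<open>Regular, proximal and limiting normals\<close>

lemma nearest_point_in_polar_tangent_cone:
  fixes S :: "'a::real_inner set"
  assumes p: "p \<in> S" "\<And>c. c \<in> S \<Longrightarrow> dist y p \<le> dist y c" and s: "s \<ge> 0"
  shows "s *\<^sub>R (y - p) \<in> polar_cone (tangent_cone S p)"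
proof -
  have "inner (y - p) w \<le> 0" if w: "w \<in> tangent_cone S p" for w
  proof -
    obtain \<tau> z where \<tau>z: "\<forall>k. \<tau> k \<in> {0<..} \<and> z k \<in> (\<lambda>c. (1 / \<tau> k) *\<^sub>R (c - p)) ` S"
      "\<tau> \<longlonglongrightarrow> 0" "z \<longlonglongrightarrow> w"
      using w unfolding tangent_cone_def PK_limsup_def by blast
    have "2 * inner (y - p) (z k) \<le> \<tau> k * (norm (z k))\<^sup>2" for k
    proof -
      obtain c where c: "c \<in> S" "z k = (1 / \<tau> k) *\<^sub>R (c - p)"
        using \<tau>z(1) by blast
      have \<tau>: "\<tau> k > 0"
        using \<tau>z(1) by auto
      have cp: "c - p = \<tau> k *\<^sub>R z k"
        using c(2) \<tau> by simp
      have "(norm (y - p))\<^sup>2 \<le> (norm ((y - p) - (c - p)))\<^sup>2"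
        using p(2)[OF c(1)] by (simp add: dist_norm power_mono)
      then have "\<tau> k * (2 * inner (y - p) (z k)) \<le> \<tau> k * (\<tau> k * (norm (z k))\<^sup>2)"
        unfolding power2_norm_diff cp by (simp add: power2_eq_square algebra_simps)
      then show ?thesis
        using \<tau> by simp
    qed
    moreover have "(\<lambda>k. 2 * inner (y - p) (z k)) \<longlonglongrightarrow> 2 * inner (y - p) w"
      by (intro tendsto_intros \<tau>z(3))
    moreover have "(\<lambda>k. \<tau> k * (norm (z k))\<^sup>2) \<longlonglongrightarrow> 0 * (norm w)\<^sup>2"
      by (intro tendsto_intros \<tau>z)
    ultimately have "2 * inner (y - p) w \<le> 0 * (norm w)\<^sup>2"
      using LIMSEQ_le by blast
    then show ?thesis
      by simp
  qed
  then show ?thesis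
    using s by (auto simp: polar_cone_def mult_nonneg_nonpos)
qed

lemma direction_limit_in_tangent_cone:
  assumes "\<And>k. c k \<in> S" "\<And>k. c k \<noteq> y" "c \<longlonglongrightarrow> y"
    and "(\<lambda>k. (1 / norm (c k - y)) *\<^sub>R (c k - y)) \<longlonglongrightarrow> l"
  shows "l \<in> tangent_cone S y"
  unfolding tangent_cone_def PK_limsup_def
proof (intro CollectI exI[of _ "\<lambda>k. norm (c k - y)"] conjI allI
    exI[of _ "\<lambda>k. (1 / norm (c k - y)) *\<^sub>R (c k - y)"])
  show "norm (c k - y) \<in> {0<..}" for k
    using assms(2) by simp
  show "(1 / norm (c k - y)) *\<^sub>R (c k - y) \<in> (\<lambda>q. (1 / norm (c k - y)) *\<^sub>R (q - y)) ` S" for k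
    using assms(1) by blast
  show "(\<lambda>k. norm (c k - y)) \<longlonglongrightarrow> 0"
    by (intro tendsto_norm_zero LIM_zero assms(3))
qed (rule assms(4))

definition eps_normal :: "real \<Rightarrow> 'a::real_inner set \<Rightarrow> 'a \<Rightarrow> 'a \<Rightarrow> bool"
  where "eps_normal \<epsilon> S x v \<longleftrightarrow> (\<exists>\<delta>>0. \<forall>c\<in>S. dist c x < \<delta> \<longrightarrow> inner v (c - x) \<le> \<epsilon> * norm (c - x))"

lemma polar_tangent_cone_imp_eps_normal:
  fixes S :: "'a::euclidean_space set"
  assumes v: "v \<in> polar_cone (tangent_cone S y)" and \<epsilon>: "\<epsilon> > 0"
  shows "eps_normal \<epsilon> S y v"
proof (rule ccontr)
  assume "\<not> ?thesis"
  then have "\<forall>\<delta>>0. \<exists>c\<in>S. dist c y < \<delta> \<and> inner v (c - y) > \<epsilon> * norm (c - y)"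
    by (auto simp: eps_normal_def not_le)
  then have "\<exists>c. c \<in> S \<and> dist c y < inverse (real (Suc k)) \<and> inner v (c - y) > \<epsilon> * norm (c - y)"
    for k
    by (meson inverse_positive_iff_positive of_nat_0_less_iff zero_less_Suc)
  then obtain c where c: "\<And>k. c k \<in> S" "\<And>k. dist (c k) y < inverse (real (Suc k))"
    "\<And>k. inner v (c k - y) > \<epsilon> * norm (c k - y)"
    by metis
  have ne: "c k \<noteq> y" for k
    using c(3)[of k] by auto
  define w where "w k = (1 / norm (c k - y)) *\<^sub>R (c k - y)" for k
  have "\<forall>k. w k \<in> sphere 0 1"
    using ne by (simp add: w_def)
  then obtain l r where l: "strict_mono r" "(w \<circ> r) \<longlonglongrightarrow> l"
    using seq_compactE[OF compact_imp_seq_compact[OF compact_sphere]] by blast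
  have "l \<in> tangent_cone S y"
  proof (rule direction_limit_in_tangent_cone[of "c \<circ> r"])
    show "(c \<circ> r) \<longlonglongrightarrow> y"
      by (rule LIMSEQ_subseq_LIMSEQ[OF LIMSEQ_of_dist_less_inverse_Suc[OF c(2)] l(1)])
    show "(\<lambda>k. (1 / norm ((c \<circ> r) k - y)) *\<^sub>R ((c \<circ> r) k - y)) \<longlonglongrightarrow> l"
      using l(2) by (simp add: w_def o_def)
  qed (use c(1) ne in auto)
  then have "inner v l \<le> 0"
    using v unfolding polar_cone_def by auto
  moreover have "\<epsilon> \<le> inner v l"
  proof (rule LIMSEQ_le[OF tendsto_const])
    show "(\<lambda>k. inner v ((w \<circ> r) k)) \<longlonglongrightarrow> inner v l"
      by (intro tendsto_intros l(2))
    show "\<exists>N. \<forall>k\<ge>N. \<epsilon> \<le> inner v ((w \<circ> r) k)"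
    proof (intro exI allI impI)
      fix k
      have "norm (c (r k) - y) > 0"
        using ne by simp
      then show "\<epsilon> \<le> inner v ((w \<circ> r) k)"
        using c(3)[of "r k"] by (simp add: w_def le_divide_eq)
    qed
  qed
  ultimately show False
    using \<epsilon> by simp
qed

lemma norm_nearest_point_shift_le:
  fixes S :: "'a::real_inner set"
  assumes x: "x \<in> S" and p: "p \<in> S" "\<And>c. c \<in> S \<Longrightarrow> dist (x + t *\<^sub>R v) p \<le> dist (x + t *\<^sub>R v) c"
    and v: "\<forall>c\<in>S. dist c x < \<delta> \<longrightarrow> inner v (c - x) \<le> \<eta> * norm (c - x)"
    and t: "t > 0" "2 * t * norm v < \<delta>" and \<eta>: "\<eta> \<ge> 0"
  shows "norm (p - x) \<le> 2 * t * \<eta>"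
proof -
  have "dist (x + t *\<^sub>R v) p \<le> dist (x + t *\<^sub>R v) x"
    using p(2) x by blast
  then have "norm (t *\<^sub>R v - (p - x)) \<le> norm (t *\<^sub>R v)"
    by (simp add: dist_norm diff_diff_eq2 add.commute)
  then have "(norm (t *\<^sub>R v - (p - x)))\<^sup>2 \<le> (norm (t *\<^sub>R v))\<^sup>2"
    by (simp add: power_mono)
  then have px: "(norm (p - x))\<^sup>2 \<le> 2 * t * inner v (p - x)"
    unfolding power2_norm_diff by simp
  also have "\<dots> \<le> (2 * t * norm v) * norm (p - x)"
    using t norm_cauchy_schwarz[of v "p - x"] by simp
  finally have "norm (p - x) \<le> 2 * t * norm v"
    by (rule le_of_power2_le_mult) (use t in simp)
  then have "inner v (p - x) \<le> \<eta> * norm (p - x)"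
    using v p(1) t(2) by (simp add: dist_norm)
  then have "2 * t * inner v (p - x) \<le> 2 * t * (\<eta> * norm (p - x))"
    using t by (intro mult_left_mono) auto
  then have "(norm (p - x))\<^sup>2 \<le> (2 * t * \<eta>) * norm (p - x)"
    using px by (simp add: mult.assoc)
  then show ?thesis
    by (rule le_of_power2_le_mult) (use t \<eta> in simp)
qed

text \<open>For small \<open>t > 0\<close> and a point \<open>p\<close> of \<open>S\<close> nearest to \<open>x + t v\<close>, the proximal normal
  \<open>(x + t v - p) / t\<close> at \<open>p\<close> is within \<open>2 \<eta>\<close> of the \<open>\<eta>\<close>-normal \<open>v\<close>.\<close>
lemma eps_normal_near_polar_tangent_cone:
  fixes S :: "'a::euclidean_space set"
  assumes S: "closed S" "x \<in> S" and v: "eps_normal \<eta> S x v" and \<eta>: "\<eta> \<ge> 0" and r: "r > 0"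
  shows "\<exists>p\<in>S. \<exists>u\<in>polar_cone (tangent_cone S p). dist p x < r \<and> dist u v \<le> 2 * \<eta>"
proof -
  obtain \<delta> where \<delta>: "\<delta> > 0" "\<forall>c\<in>S. dist c x < \<delta> \<longrightarrow> inner v (c - x) \<le> \<eta> * norm (c - x)"
    using v unfolding eps_normal_def by blast
  define t where "t = min (\<delta> / (4 * norm v + 4)) (r / (4 * \<eta> + 4))"
  have pos: "4 * norm v + 4 > 0" "4 * \<eta> + 4 > 0"
    using \<eta> by (simp_all add: add_nonneg_pos)
  have "t \<le> \<delta> / (4 * norm v + 4)" "t \<le> r / (4 * \<eta> + 4)"
    by (simp_all add: t_def)
  then have "t * (4 * norm v + 4) \<le> \<delta>" "t * (4 * \<eta> + 4) \<le> r"
    using pos by (simp_all add: pos_le_divide_eq)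
  moreover have t: "t > 0"
    using \<delta>(1) r pos by (simp add: t_def)
  then have "t * (2 * norm v) < t * (4 * norm v + 4)" "t * (2 * \<eta>) < t * (4 * \<eta> + 4)"
    using \<eta> by (simp_all add: add_nonneg_pos)
  ultimately have t\<delta>: "2 * t * norm v < \<delta>" and tr: "2 * t * \<eta> < r"
    by (simp_all add: mult.assoc)
  obtain p where p: "p \<in> S" "\<And>c. c \<in> S \<Longrightarrow> dist (x + t *\<^sub>R v) p \<le> dist (x + t *\<^sub>R v) c"
    using distance_attains_inf[OF S(1), of "x + t *\<^sub>R v"] S(2) by blast
  have px: "norm (p - x) \<le> 2 * t * \<eta>"
    by (rule norm_nearest_point_shift_le[OF S(2) p \<delta>(2) t t\<delta> \<eta>])
  define u where "u = (1 / t) *\<^sub>R (x + t *\<^sub>R v - p)"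
  have "u \<in> polar_cone (tangent_cone S p)"
    unfolding u_def using p t by (intro nearest_point_in_polar_tangent_cone) auto
  moreover have "u - v = (1 / t) *\<^sub>R (x - p)"
    using t by (simp add: u_def scaleR_diff_right scaleR_add_right)
  then have "dist u v = norm (p - x) / t"
    using t by (simp add: dist_norm norm_minus_commute)
  then have "dist u v \<le> 2 * \<eta>"
    using px t by (simp add: divide_le_eq mult_ac)
  moreover have "dist p x < r"
    using px tr by (simp add: dist_norm)
  ultimately show ?thesis
    using p(1) by blast
qed

lemma normal_coneI:
  assumes "x \<in> S" "\<forall>k. p k \<in> S \<and> u k \<in> polar_cone (tangent_cone S (p k))" "p \<longlonglongrightarrow> x" "u \<longlonglongrightarrow> v"
  shows "v \<in> normal_cone S x"
  using assms unfolding normal_cone_def PK_limsup_def by auto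

lemma normal_coneE:
  assumes "v \<in> normal_cone S x"
  obtains p u where "x \<in> S" "\<forall>k. p k \<in> S \<and> u k \<in> polar_cone (tangent_cone S (p k))"
    "p \<longlonglongrightarrow> x" "u \<longlonglongrightarrow> v"
  using assms unfolding normal_cone_def PK_limsup_def by (auto split: if_splits)

lemma normal_cone_iff_approx:
  "v \<in> normal_cone S x \<longleftrightarrow> x \<in> S \<and>
    (\<forall>e>0. \<exists>p\<in>S. \<exists>u\<in>polar_cone (tangent_cone S p). dist p x < e \<and> dist u v < e)"
proof
  assume "v \<in> normal_cone S x"
  then obtain p u where x: "x \<in> S" and pu: "\<forall>k. p k \<in> S \<and> u k \<in> polar_cone (tangent_cone S (p k))"
    "p \<longlonglongrightarrow> x" "u \<longlonglongrightarrow> v"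
    by (rule normal_coneE)
  have "\<exists>p\<in>S. \<exists>u\<in>polar_cone (tangent_cone S p). dist p x < e \<and> dist u v < e" if "e > 0" for e
  proof -
    have "\<forall>\<^sub>F k in sequentially. dist (p k) x < e \<and> dist (u k) v < e"
      using tendstoD[OF pu(2) that] tendstoD[OF pu(3) that] by (rule eventually_conj)
    then obtain N where "\<forall>k\<ge>N. dist (p k) x < e \<and> dist (u k) v < e"
      by (auto simp: eventually_sequentially)
    then show ?thesis
      using pu(1) by blast
  qed
  with x show "x \<in> S \<and> (\<forall>e>0. \<exists>p\<in>S. \<exists>u\<in>polar_cone (tangent_cone S p). dist p x < e \<and> dist u v < e)"
    by blast
next
  assume "x \<in> S \<and> (\<forall>e>0. \<exists>p\<in>S. \<exists>u\<in>polar_cone (tangent_cone S p). dist p x < e \<and> dist u v < e)"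
  then have x: "x \<in> S" and approx: "\<And>e. e > 0 \<Longrightarrow>
      \<exists>p\<in>S. \<exists>u\<in>polar_cone (tangent_cone S p). dist p x < e \<and> dist u v < e"
    by auto
  have "\<exists>p u. p \<in> S \<and> u \<in> polar_cone (tangent_cone S p) \<and>
      dist p x < inverse (real (Suc k)) \<and> dist u v < inverse (real (Suc k))" for k
  proof -
    have "inverse (real (Suc k)) > 0"
      by simp
    from approx[OF this] show ?thesis
      by blast
  qed
  then obtain p u where pu: "\<And>k. p k \<in> S \<and> u k \<in> polar_cone (tangent_cone S (p k)) \<and>
      dist (p k) x < inverse (real (Suc k)) \<and> dist (u k) v < inverse (real (Suc k))"
    by metis
  show "v \<in> normal_cone S x"
    using pu by (intro normal_coneI[OF x] LIMSEQ_of_dist_less_inverse_Suc) auto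
qed

lemma normal_cone_scaleR:
  assumes "v \<in> normal_cone S x" "t \<ge> 0"
  shows "t *\<^sub>R v \<in> normal_cone S x"
proof -
  obtain p u where x: "x \<in> S" and pu: "\<forall>k. p k \<in> S \<and> u k \<in> polar_cone (tangent_cone S (p k))"
    "p \<longlonglongrightarrow> x" "u \<longlonglongrightarrow> v"
    using assms(1) by (rule normal_coneE)
  have "t *\<^sub>R u k \<in> polar_cone (tangent_cone S (p k))" for k
    using pu(1) assms(2) by (auto simp: polar_cone_def mult_nonneg_nonpos)
  moreover have "(\<lambda>k. t *\<^sub>R u k) \<longlonglongrightarrow> t *\<^sub>R v"
    by (intro tendsto_intros pu(3))
  ultimately show ?thesis
    using pu(1,2) by (intro normal_coneI[OF x]) auto
qed

lemma zero_in_tangent_cone: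
  assumes "p \<in> S"
  shows "0 \<in> tangent_cone S p"
  unfolding tangent_cone_def PK_limsup_def
proof (intro CollectI exI[of _ "\<lambda>k. inverse (real (Suc k))"] exI[of _ "\<lambda>k. 0"] conjI allI)
  show "inverse (real (Suc k)) \<in> {0<..}" for k
    by simp
  show "0 \<in> (\<lambda>c. (1 / inverse (real (Suc k))) *\<^sub>R (c - p)) ` S" for k
    using assms by force
qed (rule LIMSEQ_inverse_real_of_nat, rule tendsto_const)

lemma tangent_cone_UNIV_Times:
  assumes "k \<in> tangent_cone S p"
  shows "(h, k) \<in> tangent_cone (UNIV \<times> S) (u, p)"
proof -
  obtain \<tau> z where \<tau>z: "\<forall>j. \<tau> j \<in> {0<..} \<and> z j \<in> (\<lambda>c. (1 / \<tau> j) *\<^sub>R (c - p)) ` S"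
    "\<tau> \<longlonglongrightarrow> 0" "z \<longlonglongrightarrow> k"
    using assms unfolding tangent_cone_def PK_limsup_def by blast
  show ?thesis
    unfolding tangent_cone_def PK_limsup_def
  proof (intro CollectI exI[of _ \<tau>] exI[of _ "\<lambda>j. (h, z j)"] conjI allI)
    fix j
    show "\<tau> j \<in> {0<..}"
      using \<tau>z(1) by blast
    obtain c where c: "c \<in> S" "z j = (1 / \<tau> j) *\<^sub>R (c - p)"
      using \<tau>z(1) by blast
    have "\<tau> j > 0"
      using \<tau>z(1) by blast
    then have "(h, z j) = (1 / \<tau> j) *\<^sub>R ((u + \<tau> j *\<^sub>R h, c) - (u, p))"
      by (simp add: c(2))
    then show "(h, z j) \<in> (\<lambda>c. (1 / \<tau> j) *\<^sub>R (c - (u, p))) ` (UNIV \<times> S)"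
      using c(1) by blast
  next
    show "\<tau> \<longlonglongrightarrow> 0"
      by (rule \<tau>z(2))
    show "(\<lambda>j. (h, z j)) \<longlonglongrightarrow> (h, k)"
      by (intro tendsto_Pair tendsto_const \<tau>z(3))
  qed
qed

lemma polar_tangent_cone_UNIV_Times:
  assumes "p \<in> S" "(a, q) \<in> polar_cone (tangent_cone (UNIV \<times> S) (u, p))"
  shows "a = 0 \<and> q \<in> polar_cone (tangent_cone S p)"
proof -
  have "inner (a, q) (a, 0) \<le> 0"
    using assms tangent_cone_UNIV_Times[OF zero_in_tangent_cone] unfolding polar_cone_def by blast
  then have "inner a a \<le> 0"
    by simp
  then have "a = 0"
    by (metis inner_gt_zero_iff not_le)
  moreover have "inner q k \<le> 0" if "k \<in> tangent_cone S p" for k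
    using assms(2) tangent_cone_UNIV_Times[OF that, of 0 u] unfolding polar_cone_def
    by auto
  ultimately show ?thesis
    by (auto simp: polar_cone_def)
qed

lemma normal_cone_UNIV_Times:
  assumes "(a, q) \<in> normal_cone (UNIV \<times> S) (u, p)"
  shows "a = 0 \<and> q \<in> normal_cone S p"
proof -
  have approx: "norm a < e \<and>
      (\<exists>p'\<in>S. \<exists>w\<in>polar_cone (tangent_cone S p'). dist p' p < e \<and> dist w q < e)"
    if "e > 0" for e
  proof -
    obtain x w where x: "x \<in> UNIV \<times> S" "w \<in> polar_cone (tangent_cone (UNIV \<times> S) x)"
      "dist x (u, p) < e" "dist w (a, q) < e"
      using assms \<open>e > 0\<close> unfolding normal_cone_iff_approx by blast
    obtain x1 x2 w1 w2 where xw: "x = (x1, x2)" "w = (w1, w2)"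
      by fastforce
    have w: "w1 = 0" "w2 \<in> polar_cone (tangent_cone S x2)"
      using polar_tangent_cone_UNIV_Times[of x2 S w1 w2 x1] x(1,2) xw by auto
    have "norm a \<le> dist w (a, q)" "dist w2 q \<le> dist w (a, q)"
      using dist_fst_le[of w "(a, q)"] dist_snd_le[of w "(a, q)"] xw w(1)
      by (simp_all add: dist_norm)
    moreover have "dist x2 p \<le> dist x (u, p)"
      using dist_snd_le[of x "(u, p)"] xw by simp
    ultimately have "norm a < e" "dist x2 p < e" "dist w2 q < e"
      using x(3,4) by linarith+
    moreover have "x2 \<in> S"
      using x(1) xw by auto
    ultimately show ?thesis
      using w(2) by blast
  qed
  have "a = 0"
  proof (rule ccontr)
    assume "a \<noteq> 0"
    then show False
      using approx[of "norm a"] by simp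
  qed
  moreover have "p \<in> S"
    using assms unfolding normal_cone_iff_approx by auto
  then have "q \<in> normal_cone S p"
    using approx unfolding normal_cone_iff_approx by blast
  ultimately show ?thesis
    by blast
qed

section \<open>Pulling back normal cones\<close>

lemma eps_normal_pullback:
  fixes \<Psi> :: "'a::real_inner \<Rightarrow> 'b::real_inner"
  assumes maps: "\<And>c. c \<in> S \<Longrightarrow> \<Psi> c \<in> S'"
    and v: "eps_normal \<epsilon> S' (\<Psi> x) v" and \<epsilon>: "\<epsilon> \<ge> 0" and \<rho>: "\<rho> > 0"
    and \<Psi>: "\<And>c. dist c x < \<rho> \<Longrightarrow> norm (\<Psi> c - \<Psi> x - L (c - x)) \<le> \<epsilon> * norm (c - x)"
    and L: "\<And>h. norm (L h) \<le> B * norm h" and B: "B \<ge> 0"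
    and adj: "\<And>h. inner (M v) h = inner v (L h)"
  shows "eps_normal (\<epsilon> * (B + \<epsilon> + norm v)) S x (M v)"
proof -
  obtain \<delta> where \<delta>: "\<delta> > 0"
    "\<forall>y\<in>S'. dist y (\<Psi> x) < \<delta> \<longrightarrow> inner v (y - \<Psi> x) \<le> \<epsilon> * norm (y - \<Psi> x)"
    using v unfolding eps_normal_def by blast
  have "inner (M v) (c - x) \<le> \<epsilon> * (B + \<epsilon> + norm v) * norm (c - x)"
    if c: "c \<in> S" "dist c x < min \<rho> (\<delta> / (B + \<epsilon> + 1))" for c
  proof -
    define r where "r = \<Psi> c - \<Psi> x - L (c - x)"
    have r: "norm r \<le> \<epsilon> * norm (c - x)"
      using \<Psi> c(2) by (simp add: r_def)
    have "norm (\<Psi> c - \<Psi> x) \<le> norm (L (c - x)) + norm r"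
      using norm_triangle_ineq[of "L (c - x)" r] by (simp add: r_def)
    also have "\<dots> \<le> (B + \<epsilon>) * norm (c - x)"
      using L[of "c - x"] r by (simp add: algebra_simps)
    finally have \<Psi>c: "norm (\<Psi> c - \<Psi> x) \<le> (B + \<epsilon>) * norm (c - x)" .
    also have "\<dots> \<le> (B + \<epsilon> + 1) * norm (c - x)"
      by (simp add: distrib_right)
    also have "\<dots> < \<delta>"
      using c(2) B \<epsilon> by (simp add: dist_norm pos_less_divide_eq mult.commute)
    finally have "inner v (\<Psi> c - \<Psi> x) \<le> \<epsilon> * norm (\<Psi> c - \<Psi> x)"
      using \<delta>(2) maps[OF c(1)] by (simp add: dist_norm)
    moreover have "- inner v r \<le> norm v * norm r"
      using Cauchy_Schwarz_ineq2[of v r] by linarith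
    moreover have "inner (M v) (c - x) = inner v (\<Psi> c - \<Psi> x) - inner v r"
      unfolding adj r_def by (simp add: inner_diff_right)
    ultimately have "inner (M v) (c - x) \<le> \<epsilon> * norm (\<Psi> c - \<Psi> x) + norm v * norm r"
      by linarith
    also have "\<dots> \<le> \<epsilon> * ((B + \<epsilon>) * norm (c - x)) + norm v * (\<epsilon> * norm (c - x))"
      using \<Psi>c r \<epsilon> by (intro add_mono mult_left_mono) auto
    also have "\<dots> = \<epsilon> * (B + \<epsilon> + norm v) * norm (c - x)"
      by (simp add: algebra_simps)
    finally show ?thesis .
  qed
  moreover have "min \<rho> (\<delta> / (B + \<epsilon> + 1)) > 0"
    using \<rho> \<delta>(1) B \<epsilon> by simp
  ultimately show ?thesis
    unfolding eps_normal_def by blast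
qed

lemma polar_tangent_cone_pullback_near:
  fixes \<Psi> :: "'a::euclidean_space \<Rightarrow> 'b::euclidean_space"
  assumes S: "closed S" "x' \<in> S" and maps: "\<And>c. c \<in> S \<Longrightarrow> \<Psi> c \<in> S'"
    and v: "v \<in> polar_cone (tangent_cone S' (\<Psi> x'))" and \<epsilon>: "\<epsilon> > 0"
    and \<Psi>: "\<forall>x1\<in>ball x \<delta>. \<forall>x2\<in>ball x \<delta>. norm (\<Psi> x1 - \<Psi> x2 - L (x1 - x2)) \<le> \<epsilon> * norm (x1 - x2)"
    and x': "x' \<in> ball x \<delta>"
    and L: "\<And>h. norm (L h) \<le> B * norm h" and B: "B \<ge> 0"
    and adj: "\<And>h. inner (M v) h = inner v (L h)" and r: "r > 0"
  shows "\<exists>p\<in>S. \<exists>u\<in>polar_cone (tangent_cone S p).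
    dist p x' < r \<and> dist u (M v) \<le> 2 * (\<epsilon> * (B + \<epsilon> + norm v))"
proof -
  have "eps_normal (\<epsilon> * (B + \<epsilon> + norm v)) S x' (M v)"
  proof (rule eps_normal_pullback[OF maps])
    show "eps_normal \<epsilon> S' (\<Psi> x') v"
      by (rule polar_tangent_cone_imp_eps_normal[OF v \<epsilon>])
    show "\<delta> - dist x x' > 0"
      using x' by simp
    show "norm (\<Psi> c - \<Psi> x' - L (c - x')) \<le> \<epsilon> * norm (c - x')" if "dist c x' < \<delta> - dist x x'" for c
    proof -
      have "c \<in> ball x \<delta>"
        using that dist_triangle[of x c x'] by (simp add: dist_commute)
      then show ?thesis
        using \<Psi> x' by blast
    qed
  qed (use \<epsilon> B L adj in auto)
  moreover have "\<epsilon> * (B + \<epsilon> + norm v) \<ge> 0"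
    using \<epsilon> B by simp
  ultimately show ?thesis
    using eps_normal_near_polar_tangent_cone[OF S] r by blast
qed

text \<open>The continuous right inverse \<open>\<Phi>\<close> moves regular normals of \<open>S'\<close> at points near \<open>y\<close> to
  points of \<open>S\<close> near \<open>x\<close>, where they pull back to \<open>\<epsilon>\<close>-normals and hence lie near proximal
  normals.\<close>
lemma normal_cone_pullback:
  fixes \<Psi> :: "'a::euclidean_space \<Rightarrow> 'b::euclidean_space" and \<Phi> :: "'b \<Rightarrow> 'a"
  assumes S: "closed S" "x \<in> S"
    and maps: "\<And>c. c \<in> S \<Longrightarrow> \<Psi> c \<in> S'"
    and inv: "\<And>y'. y' \<in> S' \<Longrightarrow> \<Phi> y' \<in> S \<and> \<Psi> (\<Phi> y') = y'"
    and \<Phi>: "isCont \<Phi> y" "\<Phi> y = x"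
    and \<Psi>: "has_strict_derivative \<Psi> L x"
    and adj: "\<And>v h. inner (M v) h = inner v (L h)"
    and v: "v \<in> normal_cone S' y"
  shows "M v \<in> normal_cone S x"
proof -
  have linL: "linear L"
    using \<Psi> by (simp add: has_strict_derivative_def)
  obtain B where B: "B > 0" "\<And>h. norm (L h) \<le> B * norm h"
    using linear_bounded_pos[OF linL] by blast
  have "adjoint L = M"
    by (rule adjoint_unique) (metis adj inner_commute)
  then have contM: "isCont M v"
    using adjoint_linear[OF linL] by (simp add: linear_continuous_at linear_conv_bounded_linear)
  have "\<exists>p\<in>S. \<exists>u\<in>polar_cone (tangent_cone S p). dist p x < e \<and> dist u (M v) < e" if e: "e > 0" for e
  proof -
    define \<epsilon> where "\<epsilon> = min 1 (e / (8 * (B + 2 + norm v)))"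
    have \<epsilon>: "\<epsilon> > 0" "\<epsilon> \<le> 1" "8 * (\<epsilon> * (B + 2 + norm v)) \<le> e"
      using e B(1) by (auto simp: \<epsilon>_def min_def field_simps add_pos_nonneg)
    obtain \<delta> where \<delta>: "\<delta> > 0"
      "\<forall>x1\<in>ball x \<delta>. \<forall>x2\<in>ball x \<delta>. norm (\<Psi> x1 - \<Psi> x2 - L (x1 - x2)) \<le> \<epsilon> * norm (x1 - x2)"
      using \<Psi> \<epsilon>(1) unfolding has_strict_derivative_def by blast
    have "min \<delta> e / 2 > 0"
      using \<delta>(1) e by simp
    then obtain \<delta>' where \<delta>': "\<delta>' > 0" "\<And>y'. dist y' y < \<delta>' \<Longrightarrow> dist (\<Phi> y') x < min \<delta> e / 2"
      using \<Phi> unfolding continuous_at_eps_delta by metis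
    have "e / 4 > 0"
      using e by simp
    then obtain \<eta> where \<eta>: "\<eta> > 0" "\<And>v'. dist v' v < \<eta> \<Longrightarrow> dist (M v') (M v) < e / 4"
      using contM unfolding continuous_at_eps_delta by metis
    have "min \<delta>' (min 1 \<eta>) > 0"
      using \<delta>'(1) \<eta>(1) by simp
    then obtain y' v' where y': "y' \<in> S'" "v' \<in> polar_cone (tangent_cone S' y')"
      "dist y' y < min \<delta>' (min 1 \<eta>)" "dist v' v < min \<delta>' (min 1 \<eta>)"
      using v unfolding normal_cone_iff_approx by blast
    have x': "\<Phi> y' \<in> S" "\<Psi> (\<Phi> y') = y'" "dist (\<Phi> y') x < min \<delta> e / 2"
      using inv[OF y'(1)] \<delta>'(2) y'(3) by auto
    have "min \<delta> e / 2 \<le> \<delta>"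
      using \<delta>(1) by (simp add: min_le_iff_disj)
    then have "\<Phi> y' \<in> ball x \<delta>"
      using less_le_trans[OF x'(3)] by (simp add: dist_commute)
    then have "\<exists>p\<in>S. \<exists>u\<in>polar_cone (tangent_cone S p). dist p (\<Phi> y') < e / 2 \<and>
        dist u (M v') \<le> 2 * (\<epsilon> * (B + \<epsilon> + norm v'))"
      by (intro polar_tangent_cone_pullback_near[where \<Psi> = \<Psi> and S' = S' and L = L and M = M
            and v = v', OF S(1) x'(1) maps _ \<epsilon>(1) \<delta>(2) _ B(2) _ adj])
        (use y'(2) x'(2) B(1) e in auto)
    then obtain p u where pu: "p \<in> S" "u \<in> polar_cone (tangent_cone S p)" "dist p (\<Phi> y') < e / 2"
      "dist u (M v') \<le> 2 * (\<epsilon> * (B + \<epsilon> + norm v'))"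
      by blast
    have "norm v' \<le> norm v + 1"
      using y'(4) norm_triangle_ineq2[of v' v] by (simp add: dist_norm)
    then have "\<epsilon> * (B + \<epsilon> + norm v') \<le> \<epsilon> * (B + 2 + norm v)"
      using \<epsilon>(1,2) by (intro mult_left_mono) auto
    moreover have "dist (M v') (M v) < e / 4"
      using \<eta>(2) y'(4) by simp
    ultimately have "dist u (M v) < e"
      using pu(4) \<epsilon>(3) e dist_triangle[of u "M v" "M v'"] by linarith
    moreover have "dist p x < e"
      using pu(3) x'(3) dist_triangle[of p x "\<Phi> y'"] by simp
    ultimately show ?thesis
      using pu(1,2) by blast
  qed
  then show ?thesis
    using S(2) unfolding normal_cone_iff_approx by blast
qed

lemma Reg_le:
  assumes "(u, y) \<in> gph S" "z \<noteq> 0" "(v, - z) \<in> normal_cone (gph S) (u, y)"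
  shows "Reg u y S \<le> ereal (norm v / norm z)"
proof -
  have "(1 / norm z) *\<^sub>R (v, - z) \<in> normal_cone (gph S) (u, y)"
    using assms(3) by (rule normal_cone_scaleR) simp
  then have "(1 / norm z) *\<^sub>R v \<in> coderiv S u y ((1 / norm z) *\<^sub>R z)"
    by (simp add: coderiv_def)
  then have le: "dist0 (coderiv S u y ((1 / norm z) *\<^sub>R z)) \<le> ereal (norm v / norm z)"
    unfolding dist0_def by (rule INF_lower2) (simp add: divide_inverse_commute)
  have unit: "(1 / norm z) *\<^sub>R z \<in> {z. norm z = 1}"
    using assms(2) by simp
  have "(INF z\<in>{z. norm z = 1}. dist0 (coderiv S u y z)) \<le> ereal (norm v / norm z)"
    by (rule INF_lower2[where f = "\<lambda>z. dist0 (coderiv S u y z)", OF unit le])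
  then show ?thesis
    using assms(1) by (simp add: Reg_def)
qed

lemma Reg_geI:
  assumes "(u, y) \<in> gph S"
    and "\<And>z v. norm z = 1 \<Longrightarrow> (v, - z) \<in> normal_cone (gph S) (u, y) \<Longrightarrow> r \<le> ereal (norm v)"
  shows "r \<le> Reg u y S"
  using assms unfolding Reg_def dist0_def coderiv_def by (auto intro!: INF_greatest)

lemma Reg_nonneg: "0 \<le> Reg u y S"
  unfolding Reg_def dist0_def by (auto intro!: INF_greatest)

lemma Reg_lessE:
  assumes "(u, y) \<in> gph S" "Reg u y S < ereal e"
  obtains z v where "norm z = 1" "(v, - z) \<in> normal_cone (gph S) (u, y)" "norm v < e"
  using assms unfolding Reg_def dist0_def coderiv_def by (auto simp: INF_less_iff)

section \<open>Four reformulations of a generalized equation\<close>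

locale generalized_equation =
  fixes F :: "'a::euclidean_space \<Rightarrow> 'b::euclidean_space" and C :: "'a \<Rightarrow> 'b set"
    and A :: "'a \<Rightarrow> 'b" and ub :: 'a and yb :: 'b
  assumes continuous_F: "continuous_on UNIV F"
    and closed_gph_C: "closed (gph C)"
    and base_point: "(ub, yb) \<in> gph C"
    and strict_derivative_F: "has_strict_derivative F A ub"
begin

definition Sigma_map :: "'a \<Rightarrow> 'b set"
  where "Sigma_map = (\<lambda>u. (\<lambda>y. F u + y) ` C u)"

definition CC_map :: "'a \<Rightarrow> ('a \<times> 'b) set"
  where "CC_map = (\<lambda>u. (\<lambda>p. (- u, F u) + p) ` gph C)"

definition Q_map :: "'a \<times> 'b \<Rightarrow> 'b set"
  where "Q_map = (\<lambda>(u, y). (\<lambda>d. (F u + y) + d) ` indicator_map (gph C) (u, y))"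

definition QQ_map :: "'a \<times> 'a \<times> 'b \<Rightarrow> ('a \<times> 'b) set"
  where "QQ_map = (\<lambda>(u, \<sigma>, y). (\<lambda>d. (- u + \<sigma>, F u + y) + d) ` indicator_map (gph C) (\<sigma>, y))"

lemma gph_Sigma_map: "gph Sigma_map = {(u, w). (u, w - F u) \<in> gph C}"
  by (force simp: gph_def Sigma_map_def image_iff)

lemma gph_CC_map: "gph CC_map = {(u, s, w). (s + u, w - F u) \<in> gph C}"
proof -
  have "(s, w) \<in> (\<lambda>p. (- u, F u) + p) ` gph C \<longleftrightarrow> (s + u, w - F u) \<in> gph C" for u s w
  proof
    assume "(s, w) \<in> (\<lambda>p. (- u, F u) + p) ` gph C"
    then show "(s + u, w - F u) \<in> gph C"
      by auto
  next
    assume "(s + u, w - F u) \<in> gph C"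
    moreover have "(s, w) = (- u, F u) + (s + u, w - F u)"
      by simp
    ultimately show "(s, w) \<in> (\<lambda>p. (- u, F u) + p) ` gph C"
      by blast
  qed
  then show ?thesis
    by (auto simp: gph_def CC_map_def)
qed

lemma gph_Q_map: "gph Q_map = {((u, y), w). (u, y) \<in> gph C \<and> w = F u + y}"
  by (auto simp: gph_def Q_map_def indicator_map_def split: if_splits)

lemma gph_QQ_map: "gph QQ_map = {((u, \<sigma>, y), s, w). (\<sigma>, y) \<in> gph C \<and> s = \<sigma> - u \<and> w = F u + y}"
  by (auto simp: gph_def QQ_map_def indicator_map_def zero_prod_def split: if_splits)

lemma isCont_F_compose [continuous_intros]: "isCont g x \<Longrightarrow> isCont (\<lambda>p. F (g p)) x"
  using continuous_F by (simp add: continuous_on_eq_continuous_at isCont_o2)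

lemma closed_gph_Sigma_map: "closed (gph Sigma_map)"
proof -
  have "closed ((\<lambda>p. (fst p, snd p - F (fst p))) -` gph C)"
    by (rule continuous_closed_vimage[OF closed_gph_C]) (intro continuous_intros)
  moreover have "gph Sigma_map = (\<lambda>p. (fst p, snd p - F (fst p))) -` gph C"
    by (auto simp: gph_Sigma_map)
  ultimately show ?thesis
    by simp
qed

lemma closed_gph_CC_map: "closed (gph CC_map)"
proof -
  have "closed ((\<lambda>p. (fst (snd p) + fst p, snd (snd p) - F (fst p))) -` gph C)"
    by (rule continuous_closed_vimage[OF closed_gph_C]) (intro continuous_intros)
  moreover have "gph CC_map = (\<lambda>p. (fst (snd p) + fst p, snd (snd p) - F (fst p))) -` gph C"
    by (auto simp: gph_CC_map)
  ultimately show ?thesis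
    by simp
qed

lemma closed_gph_Q_map: "closed (gph Q_map)"
proof -
  have "closed ((\<lambda>p. (fst p, snd p - F (fst (fst p)) - snd (fst p))) -` (gph C \<times> {0}))"
    by (rule continuous_closed_vimage[OF closed_Times[OF closed_gph_C closed_singleton]])
      (intro continuous_intros)
  moreover have "gph Q_map = (\<lambda>p. (fst p, snd p - F (fst (fst p)) - snd (fst p))) -` (gph C \<times> {0})"
    by (auto simp: gph_Q_map)
  ultimately show ?thesis
    by simp
qed

lemma closed_gph_QQ_map: "closed (gph QQ_map)"
proof -
  have "closed ((\<lambda>p. (snd (fst p), snd p - (fst (snd (fst p)) - fst (fst p),
      F (fst (fst p)) + snd (snd (fst p))))) -` (gph C \<times> {0}))"
    by (rule continuous_closed_vimage[OF closed_Times[OF closed_gph_C closed_singleton]])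
      (intro continuous_intros)
  moreover have "gph QQ_map = (\<lambda>p. (snd (fst p), snd p - (fst (snd (fst p)) - fst (fst p),
      F (fst (fst p)) + snd (snd (fst p))))) -` (gph C \<times> {0})"
    by (auto simp: gph_QQ_map zero_prod_def)
  ultimately show ?thesis
    by simp
qed

lemma linear_A: "linear A"
  using strict_derivative_F by (simp add: has_strict_derivative_def)

lemma inner_adjoint_A: "inner (adjoint A b) h = inner b (A h)"
  by (rule adjoint_clauses(2)[OF linear_A])

lemmas inner_adjoint_A_simps = inner_prod_def inner_adjoint_A inner_add_left inner_add_right
  inner_diff_left inner_diff_right

lemmas linear_adjoint_A_simps = linear_add[OF adjoint_linear[OF linear_A]]
  linear_diff[OF adjoint_linear[OF linear_A]] linear_neg[OF adjoint_linear[OF linear_A]]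

lemma normal_cone_gph_Sigma_map_iff:
  "(a, b) \<in> normal_cone (gph Sigma_map) (ub, F ub + yb) \<longleftrightarrow>
    (a + adjoint A b, b) \<in> normal_cone (gph C) (ub, yb)"
proof
  assume v: "(a, b) \<in> normal_cone (gph Sigma_map) (ub, F ub + yb)"
  have strict: "has_strict_derivative (\<lambda>p. (fst p, F (fst p) + snd p)) (\<lambda>p. (fst p, A (fst p) + snd p))
      (ub, yb)"
    by (rule has_strict_derivative_linear_plus_compose[where \<Lambda> = "\<lambda>p. p" and J = "\<lambda>z. (0, z)"
          and \<pi> = fst])
      (auto simp: strict_derivative_F linear_iff scaleR_add_right intro!: bounded_linear_intros)
  have cont: "isCont (\<lambda>q. (fst q, snd q - F (fst q))) (ub, F ub + yb)"
    by (intro continuous_intros)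
  show "(a + adjoint A b, b) \<in> normal_cone (gph C) (ub, yb)"
    by (rule normal_cone_pullback[OF closed_gph_C base_point _ _ cont _ strict _ v,
          where M = "\<lambda>q. (fst q + adjoint A (snd q), snd q)", simplified])
      (auto simp: gph_Sigma_map inner_adjoint_A_simps)
next
  assume v: "(a + adjoint A b, b) \<in> normal_cone (gph C) (ub, yb)"
  have strict: "has_strict_derivative (\<lambda>p. (fst p, snd p - F (fst p))) (\<lambda>p. (fst p, snd p - A (fst p)))
      (ub, F ub + yb)"
    by (rule has_strict_derivative_linear_plus_compose[where \<Lambda> = "\<lambda>p. p" and J = "\<lambda>z. (0, - z)"
          and \<pi> = fst])
      (auto simp: strict_derivative_F linear_iff scaleR_add_right
        intro!: bounded_linear_intros bounded_linear_minus)
  have cont: "isCont (\<lambda>q. (fst q, F (fst q) + snd q)) (ub, yb)"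
    by (intro continuous_intros)
  show "(a, b) \<in> normal_cone (gph Sigma_map) (ub, F ub + yb)"
    by (rule normal_cone_pullback[OF closed_gph_Sigma_map _ _ _ cont _ strict _ v,
          where M = "\<lambda>q. (fst q - adjoint A (snd q), snd q)", simplified])
      (auto simp: gph_Sigma_map base_point inner_adjoint_A_simps)
qed

lemma normal_cone_gph_CC_map_of_gph_C:
  assumes v: "(b, c) \<in> normal_cone (gph C) (ub, yb)"
  shows "(b - adjoint A c, b, c) \<in> normal_cone (gph CC_map) (ub, 0, F ub + yb)"
proof -
  have strict: "has_strict_derivative (\<lambda>p. (fst (snd p) + fst p, snd (snd p) - F (fst p)))
      (\<lambda>p. (fst (snd p) + fst p, snd (snd p) - A (fst p))) (ub, 0, F ub + yb)"
    by (rule has_strict_derivative_linear_plus_compose[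
          where \<Lambda> = "\<lambda>p. (fst (snd p) + fst p, snd (snd p))" and J = "\<lambda>z. (0, - z)" and \<pi> = fst])
      (auto simp: strict_derivative_F linear_iff scaleR_add_right
        intro!: bounded_linear_intros bounded_linear_minus)
  have cont: "isCont (\<lambda>q. (ub, fst q - ub, F ub + snd q)) (ub, yb)"
    by (intro continuous_intros)
  show ?thesis
    by (rule normal_cone_pullback[OF closed_gph_CC_map _ _ _ cont _ strict _ v,
          where M = "\<lambda>q. (fst q - adjoint A (snd q), q)", simplified])
      (auto simp: gph_CC_map base_point inner_adjoint_A_simps)
qed

lemma normal_cone_gph_Q_map_of_gph_C:
  assumes v: "(b, c) \<in> normal_cone (gph C) (ub, yb)"
  shows "((b - adjoint A c, 0), c) \<in> normal_cone (gph Q_map) ((ub, yb), F ub + yb)"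
proof -
  have strict: "has_strict_derivative (\<lambda>p. (fst (fst p), snd p - F (fst (fst p))))
      (\<lambda>p. (fst (fst p), snd p - A (fst (fst p)))) ((ub, yb), F ub + yb)"
    by (rule has_strict_derivative_linear_plus_compose[where \<Lambda> = "\<lambda>p. (fst (fst p), snd p)"
          and J = "\<lambda>z. (0, - z)" and \<pi> = "\<lambda>p. fst (fst p)"])
      (auto simp: strict_derivative_F linear_iff scaleR_add_right
        intro!: bounded_linear_intros bounded_linear_minus)
  have cont: "isCont (\<lambda>q. (q, F (fst q) + snd q)) (ub, yb)"
    by (intro continuous_intros)
  show ?thesis
    by (rule normal_cone_pullback[OF closed_gph_Q_map _ _ _ cont _ strict _ v,
          where M = "\<lambda>q. ((fst q - adjoint A (snd q), 0), snd q)", simplified])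
      (auto simp: gph_Q_map base_point inner_adjoint_A_simps)
qed

lemma normal_cone_gph_QQ_map_of_gph_CC_map:
  assumes v: "(a, b, c) \<in> normal_cone (gph CC_map) (ub, 0, F ub + yb)"
  shows "((a, 0, 0), b, c) \<in> normal_cone (gph QQ_map) ((ub, ub, yb), 0, F ub + yb)"
proof -
  have strict: "has_strict_derivative (\<lambda>p. (fst (fst p), snd p)) (\<lambda>p. (fst (fst p), snd p))
      ((ub, ub, yb), 0, F ub + yb)"
    by (rule has_strict_derivative_linear) (simp add: linear_iff)
  have cont: "isCont (\<lambda>q. ((fst q, fst (snd q) + fst q, snd (snd q) - F (fst q)), snd q))
      (ub, 0, F ub + yb)"
    by (intro continuous_intros)
  show ?thesis
    by (rule normal_cone_pullback[OF closed_gph_QQ_map _ _ _ cont _ strict _ v,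
          where M = "\<lambda>q. ((fst q, 0, 0), snd q)", simplified])
      (auto simp: gph_QQ_map gph_CC_map base_point inner_prod_def)
qed

lemma normal_cone_gph_C_of_gph_QQ_map:
  assumes v: "((a1, a2, a3), b, c) \<in> normal_cone (gph QQ_map) ((ub, ub, yb), 0, F ub + yb)"
  shows "a1 - b + adjoint A c = 0 \<and> (a2 + b, a3 + c) \<in> normal_cone (gph C) (ub, yb)"
proof -
  have strict: "has_strict_derivative (\<lambda>p. (p, fst (snd p) - fst p, F (fst p) + snd (snd p)))
      (\<lambda>p. (p, fst (snd p) - fst p, A (fst p) + snd (snd p))) (ub, ub, yb)"
    by (rule has_strict_derivative_linear_plus_compose[
          where \<Lambda> = "\<lambda>p. (p, fst (snd p) - fst p, snd (snd p))" and J = "\<lambda>z. (0, 0, z)" and \<pi> = fst])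
      (auto simp: strict_derivative_F linear_iff scaleR_add_right scaleR_diff_right
        intro!: bounded_linear_intros)
  have cont: "isCont fst ((ub, ub, yb), 0, F ub + yb)"
    by (intro continuous_intros)
  have "(a1 - b + adjoint A c, a2 + b, a3 + c) \<in> normal_cone (UNIV \<times> gph C) (ub, ub, yb)"
    by (rule normal_cone_pullback[OF closed_Times[OF closed_UNIV closed_gph_C] _ _ _ cont _ strict _ v,
          where M = "\<lambda>q. (fst (fst q) - fst (snd q) + adjoint A (snd (snd q)),
            fst (snd (fst q)) + fst (snd q), snd (snd (fst q)) + snd (snd q))", simplified])
      (auto simp: gph_QQ_map base_point inner_adjoint_A_simps)
  then show ?thesis
    by (rule normal_cone_UNIV_Times)
qed

lemma base_point_gph:
  "(ub, F ub + yb) \<in> gph Sigma_map"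
  "(ub, 0, F ub + yb) \<in> gph CC_map"
  "((ub, yb), F ub + yb) \<in> gph Q_map"
  "((ub, ub, yb), 0, F ub + yb) \<in> gph QQ_map"
  by (simp_all add: gph_Sigma_map gph_CC_map gph_Q_map gph_QQ_map base_point)

lemma Reg_CC_map_le_Reg_Sigma_map:
  "Reg ub (0, F ub + yb) CC_map \<le> Reg ub (F ub + yb) Sigma_map"
proof (rule Reg_geI[OF base_point_gph(1)])
  fix z v
  assume z: "norm z = 1" and v: "(v, - z) \<in> normal_cone (gph Sigma_map) (ub, F ub + yb)"
  have "(v - adjoint A z, - z) \<in> normal_cone (gph C) (ub, yb)"
    using v by (simp add: normal_cone_gph_Sigma_map_iff linear_adjoint_A_simps)
  from normal_cone_gph_CC_map_of_gph_C[OF this]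
  have "(v, - (adjoint A z - v, z)) \<in> normal_cone (gph CC_map) (ub, 0, F ub + yb)"
    by (simp add: linear_adjoint_A_simps)
  moreover have "(adjoint A z - v, z) \<noteq> 0"
    using z by (auto simp: zero_prod_def)
  ultimately have "Reg ub (0, F ub + yb) CC_map \<le> ereal (norm v / norm (adjoint A z - v, z))"
    by (intro Reg_le base_point_gph)
  also have "norm v / norm (adjoint A z - v, z) \<le> norm v"
    using z norm_snd_le[of z "adjoint A z - v"] by (simp add: divide_le_eq mult_le_cancel_left1)
  finally show "Reg ub (0, F ub + yb) CC_map \<le> ereal (norm v)"
    by simp
qed

lemma Reg_Q_map_le_Reg_Sigma_map:
  "Reg (ub, yb) (F ub + yb) Q_map \<le> Reg ub (F ub + yb) Sigma_map"
proof (rule Reg_geI[OF base_point_gph(1)])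
  fix z v
  assume z: "norm z = 1" and v: "(v, - z) \<in> normal_cone (gph Sigma_map) (ub, F ub + yb)"
  have "(v - adjoint A z, - z) \<in> normal_cone (gph C) (ub, yb)"
    using v by (simp add: normal_cone_gph_Sigma_map_iff linear_adjoint_A_simps)
  from normal_cone_gph_Q_map_of_gph_C[OF this]
  have "((v, 0), - z) \<in> normal_cone (gph Q_map) ((ub, yb), F ub + yb)"
    by (simp add: linear_adjoint_A_simps)
  then have "Reg (ub, yb) (F ub + yb) Q_map \<le> ereal (norm (v, 0::'b) / norm z)"
    using z by (intro Reg_le base_point_gph) auto
  then show "Reg (ub, yb) (F ub + yb) Q_map \<le> ereal (norm v)"
    using z by (simp add: norm_Pair)
qed

lemma Reg_QQ_map_le_Reg_CC_map:
  "Reg (ub, ub, yb) (0, F ub + yb) QQ_map \<le> Reg ub (0, F ub + yb) CC_map"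
proof (rule Reg_geI[OF base_point_gph(2)])
  fix z :: "'a \<times> 'b" and v
  assume z: "norm z = 1" and v: "(v, - z) \<in> normal_cone (gph CC_map) (ub, 0, F ub + yb)"
  obtain z1 z2 where zz: "z = (z1, z2)"
    by fastforce
  have "((v, 0, 0), - z) \<in> normal_cone (gph QQ_map) ((ub, ub, yb), 0, F ub + yb)"
    using normal_cone_gph_QQ_map_of_gph_CC_map[of v "- z1" "- z2"] v by (simp add: zz)
  then have "Reg (ub, ub, yb) (0, F ub + yb) QQ_map \<le> ereal (norm (v, 0::'a, 0::'b) / norm z)"
    using z by (intro Reg_le base_point_gph) auto
  then show "Reg (ub, ub, yb) (0, F ub + yb) QQ_map \<le> ereal (norm v)"
    using z by (simp add: norm_Pair)
qed

lemma normal_cone_gph_Sigma_map_of_gph_QQ_map: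
  assumes "((a1, a2, a3), - (w1, w2)) \<in> normal_cone (gph QQ_map) ((ub, ub, yb), 0, F ub + yb)"
  shows "w1 = adjoint A w2 - a1 \<and>
    (a1 + a2 - adjoint A a3, - (w2 - a3)) \<in> normal_cone (gph Sigma_map) (ub, F ub + yb)"
proof -
  have "a1 - - w1 + adjoint A (- w2) = 0 \<and> (a2 + - w1, a3 + - w2) \<in> normal_cone (gph C) (ub, yb)"
    using assms by (intro normal_cone_gph_C_of_gph_QQ_map) simp
  then have w1: "w1 = adjoint A w2 - a1" and nC: "(a2 - w1, a3 - w2) \<in> normal_cone (gph C) (ub, yb)"
    by (simp_all add: linear_adjoint_A_simps algebra_simps)
  have "(a1 + a2 - adjoint A a3 + adjoint A (- (w2 - a3)), - (w2 - a3)) = (a2 - w1, a3 - w2)"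
    by (simp add: w1 linear_adjoint_A_simps)
  then have "(a1 + a2 - adjoint A a3, - (w2 - a3)) \<in> normal_cone (gph Sigma_map) (ub, F ub + yb)"
    unfolding normal_cone_gph_Sigma_map_iff using nC by (simp only:)
  with w1 show ?thesis
    by blast
qed

lemma Reg_Sigma_map_le_of_normal_QQ_map:
  assumes w: "norm (w1, w2) = 1"
    and normal: "((a1, a2, a3), - (w1, w2)) \<in> normal_cone (gph QQ_map) ((ub, ub, yb), 0, F ub + yb)"
    and K: "K \<ge> 0" "\<And>h. norm (adjoint A h) \<le> K * norm h"
    and a: "norm (a1, a2, a3) \<le> 1 / (4 * (K + 1))"
  shows "Reg ub (F ub + yb) Sigma_map \<le> ereal (2 * (K + 1) * (K + 2) * norm (a1, a2, a3))"
proof -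
  define \<alpha> where "\<alpha> = norm (a1, a2, a3)"
  have \<alpha>: "norm a1 \<le> \<alpha>" "norm a2 \<le> \<alpha>" "norm a3 \<le> \<alpha>"
    unfolding \<alpha>_def by (rule norm_fst_le order_trans[OF norm_fst_le norm_snd_le]
        order_trans[OF norm_snd_le norm_snd_le])+
  define d where "d = a1 + a2 - adjoint A a3"
  define z where "z = w2 - a3"
  have w1: "w1 = adjoint A w2 - a1"
    and normal_Sigma: "(d, - z) \<in> normal_cone (gph Sigma_map) (ub, F ub + yb)"
    using normal_cone_gph_Sigma_map_of_gph_QQ_map[OF normal] by (simp_all add: d_def z_def)
  have "norm d \<le> norm a1 + norm a2 + norm (adjoint A a3)"
    using norm_triangle_ineq4[of "a1 + a2" "adjoint A a3"] norm_triangle_ineq[of a1 a2]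
    unfolding d_def by linarith
  also have "\<dots> \<le> (K + 2) * \<alpha>"
    using \<alpha> K(2)[of a3] mult_left_mono[OF \<alpha>(3) K(1)] by (simp add: algebra_simps)
  finally have d: "norm d \<le> (K + 2) * \<alpha>" .
  have "1 \<le> norm w1 + norm w2"
    using w norm_Pair_le[of w1 w2] by simp
  moreover have "norm w1 \<le> K * norm w2 + \<alpha>"
    using w1 norm_triangle_ineq4[of "adjoint A w2" a1] K(2)[of w2] \<alpha>(1) by simp
  moreover have "norm w2 - \<alpha> \<le> norm z"
    using norm_triangle_ineq2[of w2 a3] \<alpha>(3) by (simp add: z_def)
  ultimately have "1 - (K + 2) * \<alpha> \<le> (K + 1) * norm z"
    using K(1) mult_left_mono[of "norm w2 - \<alpha>" "norm z" K] by (simp add: algebra_simps)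
  moreover have "4 * (K + 1) * \<alpha> \<le> 1"
    using a K(1) by (simp add: \<alpha>_def pos_le_divide_eq mult.commute)
  moreover have "(K + 2) * \<alpha> \<le> 2 * (K + 1) * \<alpha>"
    using K(1) by (intro mult_right_mono) (auto simp: \<alpha>_def)
  ultimately have z: "1 \<le> 2 * (K + 1) * norm z"
    by linarith
  then have "Reg ub (F ub + yb) Sigma_map \<le> ereal (norm d / norm z)"
    using normal_Sigma by (intro Reg_le base_point_gph) auto
  also have "(K + 2) * \<alpha> * 1 \<le> (K + 2) * \<alpha> * (2 * (K + 1) * norm z)"
    using z K(1) by (intro mult_left_mono) (auto simp: \<alpha>_def)
  then have "norm d / norm z \<le> 2 * (K + 1) * (K + 2) * \<alpha>"
    using d z by (auto simp: divide_le_eq algebra_simps)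
  finally show ?thesis
    by (simp add: \<alpha>_def)
qed

lemma Reg_Sigma_map_eq_0_if_Reg_QQ_map_eq_0:
  assumes "Reg (ub, ub, yb) (0, F ub + yb) QQ_map = 0"
  shows "Reg ub (F ub + yb) Sigma_map = 0"
proof -
  obtain K where K: "K > 0" "\<And>h. norm (adjoint A h) \<le> K * norm h"
    using linear_bounded_pos[OF adjoint_linear[OF linear_A]] by blast
  have "Reg ub (F ub + yb) Sigma_map \<le> 0 + ereal e" if e: "e > 0" for e
  proof -
    define \<delta> where "\<delta> = min (1 / (4 * (K + 1))) (e / (2 * (K + 1) * (K + 2)))"
    have "\<delta> > 0"
      using K(1) e by (simp add: \<delta>_def)
    then have "Reg (ub, ub, yb) (0, F ub + yb) QQ_map < ereal \<delta>"
      using assms by simp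
    then obtain w a where w: "norm w = 1"
      and normal: "(a, - w) \<in> normal_cone (gph QQ_map) ((ub, ub, yb), 0, F ub + yb)"
      and a: "norm a < \<delta>"
      by (rule Reg_lessE[OF base_point_gph(4)])
    obtain w1 w2 a1 a2 a3 where wa: "w = (w1, w2)" "a = (a1, a2, a3)"
      by (metis prod.collapse)
    have "Reg ub (F ub + yb) Sigma_map \<le> ereal (2 * (K + 1) * (K + 2) * norm a)"
      using w normal a K unfolding wa
      by (intro Reg_Sigma_map_le_of_normal_QQ_map) (auto simp: \<delta>_def)
    also have "norm a \<le> e / (2 * (K + 1) * (K + 2))"
      using a by (simp add: \<delta>_def)
    then have "2 * (K + 1) * (K + 2) * norm a \<le> e"
      using K(1) by (simp add: pos_le_divide_eq mult.commute)
    finally show ?thesis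
      by simp
  qed
  then have "Reg ub (F ub + yb) Sigma_map \<le> 0"
    by (rule ereal_le_epsilon2)
  then show ?thesis
    using Reg_nonneg by (rule antisym)
qed

end

theorem theorem5:
  fixes F :: "real^'n \<Rightarrow> real^'m"
    and C :: "real^'n \<Rightarrow> (real^'m) set"
    and ub :: "real^'n" and yb :: "real^'m"
  assumes contF: "continuous_on UNIV F"
    and closedC: "closed (gph C)"
    and gb: "(ub, yb) \<in> gph C"
    and strict: "strictly_differentiable_at F ub"
  defines "\<Sigma> \<equiv> (\<lambda>u. (\<lambda>y. F u + y) ` C u)"
    and "CC \<equiv> (\<lambda>u. (\<lambda>p. (- u, F u) + p) ` gph C)"
    and "Q \<equiv> (\<lambda>(u, y). (\<lambda>d. (F u + y) + d) ` indicator_map (gph C) (u, y))"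
    and "QQ \<equiv> (\<lambda>(u, \<sigma>, y). (\<lambda>d. (- u + \<sigma>, F u + y) + d) ` indicator_map (gph C) (\<sigma>, y))"
  shows "closed (gph \<Sigma>) \<and> closed (gph CC) \<and> closed (gph Q) \<and> closed (gph QQ)
     \<and> Reg ub (F ub + yb) \<Sigma> \<ge> max (Reg ub (0, F ub + yb) CC) (Reg (ub, yb) (F ub + yb) Q)
     \<and> max (Reg ub (0, F ub + yb) CC) (Reg (ub, yb) (F ub + yb) Q) \<ge> Reg (ub, ub, yb) (0, F ub + yb) QQ
     \<and> Reg (ub, ub, yb) (0, F ub + yb) QQ \<ge> 0
     \<and> (Reg (ub, ub, yb) (0, F ub + yb) QQ = 0 \<longrightarrow>
          Reg ub (F ub + yb) \<Sigma> = 0 \<and> Reg ub (0, F ub + yb) CC = 0 \<and> Reg (ub, yb) (F ub + yb) Q = 0)"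
proof -
  obtain A where A: "has_strict_derivative F A ub"
    using strict by (auto simp: strictly_differentiable_at_iff)
  interpret generalized_equation F C A ub yb
    using contF closedC gb A by (rule generalized_equation.intro)
  have maps: "\<Sigma> = Sigma_map" "CC = CC_map" "Q = Q_map" "QQ = QQ_map"
    by (simp_all add: \<Sigma>_def CC_def Q_def QQ_def Sigma_map_def CC_map_def Q_map_def QQ_map_def)
  have "Reg (ub, ub, yb) (0, F ub + yb) QQ_map = 0 \<Longrightarrow> Reg ub (F ub + yb) Sigma_map = 0 \<and>
      Reg ub (0, F ub + yb) CC_map = 0 \<and> Reg (ub, yb) (F ub + yb) Q_map = 0"
    using Reg_Sigma_map_eq_0_if_Reg_QQ_map_eq_0 Reg_CC_map_le_Reg_Sigma_map Reg_Q_map_le_Reg_Sigma_map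
      Reg_nonneg by (metis antisym)
  then show ?thesis
    unfolding maps
    using closed_gph_Sigma_map closed_gph_CC_map closed_gph_Q_map closed_gph_QQ_map
      Reg_CC_map_le_Reg_Sigma_map Reg_Q_map_le_Reg_Sigma_map Reg_QQ_map_le_Reg_CC_map Reg_nonneg
    by (auto simp: le_max_iff_disj)
qed

end
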